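(* Let $A = \langle \Sigma, Q, q_0, \tau, \phi\rangle$ be an NFA, let $\Psi : Q \to \tilde{Q}$ be a merge operation producing the NFA $\tilde{A} = \langle \Sigma, \tilde{Q}, \tilde{q}_0, \tilde{\tau}, \tilde{\phi}\rangle$, and let $Q^{\mathrm{r}}$ and $\tilde{Q}^{\mathrm{r}}$ be the sets of recurrent states of $A$ and $\tilde{A}$, respectively. If $Q^{\mathrm{r}}$ consists of a single closed communicating class, then $\Psi(Q^{\mathrm{r}}) \subseteq \tilde{Q}^{\mathrm{r}}$.
   Context: An NFA $A = \langle \Sigma, Q, q_0, \tau, \phi\rangle$ has finite alphabet $\Sigma$, finite state set $Q$, initial state $q_0$, transition function $\tau : Q\times\Sigma \to 2^Q$, termination function $\phi: Q \to \{0,1\}$; $\tau$ extends to strings by $\tau(q,\lambda)=\{q\}$, $\tau(q,x\sigma) = \bigcup_{q'\in\tau(q,x)}\tau(q',\sigma)$, and $\tau_\star(S) = \bigcup_{q\in S, x\in\Sigma^\star}\tau(q,x)$. States $q,q'$ communicate if $q' \in \tau_\star(q)$ and $q\in\tau_\star(q')$; the equivalence classes are communicating classes; a class $Q'$ is closed if $\tau_\star(Q') = Q'$. A state is recurrent if it belongs to some closed communicating class. $\tilde{A}$ is obtained from $A$ by a merge operation $\Psi : Q \to \tilde{Q}$ if $\Psi$ is surjective, $\Psi(q_0) = \tilde{q}_0$, $\phi(q) = \tilde{\phi}(\Psi(q))$ for all $q \in Q$, and for all $q\in Q$, $\sigma \in \Sigma$, $q' \in \tau(q,\sigma)$ implies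 $\Psi(q') \in \tilde{\tau}(\Psi(q),\sigma)$. *)

theory Defs
  imports Main
begin

definition nfa :: "'s set \<Rightarrow> 'q set \<Rightarrow> 'q \<Rightarrow> ('q \<Rightarrow> 's \<Rightarrow> 'q set) \<Rightarrow> ('q \<Rightarrow> bool) \<Rightarrow> bool" where
  "nfa Sig Q q0 tau phi \<longleftrightarrow> finite Sig \<and> finite Q \<and> q0 \<in> Q \<and>
     (\<forall>q\<in>Q. \<forall>\<sigma>\<in>Sig. tau q \<sigma> \<subseteq> Q)"

definition tau_str :: "('q \<Rightarrow> 's \<Rightarrow> 'q set) \<Rightarrow> 'q \<Rightarrow> 's list \<Rightarrow> 'q set" where
  "tau_str tau q x = foldl (\<lambda>S \<sigma>. \<Union>q'\<in>S. tau q' \<sigma>) {q} x"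

lemma tau_str_Nil: "tau_str tau q [] = {q}"
  by (simp add: tau_str_def)

lemma tau_str_snoc: "tau_str tau q (x @ [\<sigma>]) = (\<Union>q'\<in>tau_str tau q x. tau q' \<sigma>)"
  by (simp add: tau_str_def)

definition tau_star :: "'s set \<Rightarrow> ('q \<Rightarrow> 's \<Rightarrow> 'q set) \<Rightarrow> 'q set \<Rightarrow> 'q set" where
  "tau_star Sig tau S = (\<Union>q\<in>S. \<Union>x\<in>lists Sig. tau_str tau q x)"

definition communicate :: "'s set \<Rightarrow> ('q \<Rightarrow> 's \<Rightarrow> 'q set) \<Rightarrow> 'q \<Rightarrow> 'q \<Rightarrow> bool" where
  "communicate Sig tau q q' \<longleftrightarrow> q' \<in> tau_star Sig tau {q} \<and> q \<in> tau_star Sig tau {q'}"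

definition comm_classes :: "'s set \<Rightarrow> 'q set \<Rightarrow> ('q \<Rightarrow> 's \<Rightarrow> 'q set) \<Rightarrow> 'q set set" where
  "comm_classes Sig Q tau = (\<lambda>q. {q'\<in>Q. communicate Sig tau q q'}) ` Q"

definition closed_classes :: "'s set \<Rightarrow> 'q set \<Rightarrow> ('q \<Rightarrow> 's \<Rightarrow> 'q set) \<Rightarrow> 'q set set" where
  "closed_classes Sig Q tau = {C \<in> comm_classes Sig Q tau. tau_star Sig tau C = C}"

definition recurrent_states :: "'s set \<Rightarrow> 'q set \<Rightarrow> ('q \<Rightarrow> 's \<Rightarrow> 'q set) \<Rightarrow> 'q set" where
  "recurrent_states Sig Q tau = \<Union>(closed_classes Sig Q tau)"

definition merge_op ::
  "'s set \<Rightarrow> 'q set \<Rightarrow> 'q \<Rightarrow> ('q \<Rightarrow> 's \<Rightarrow> 'q set) \<Rightarrow> ('q \<Rightarrow> bool) \<Rightarrow>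
   'p set \<Rightarrow> 'p \<Rightarrow> ('p \<Rightarrow> 's \<Rightarrow> 'p set) \<Rightarrow> ('p \<Rightarrow> bool) \<Rightarrow> ('q \<Rightarrow> 'p) \<Rightarrow> bool" where
  "merge_op Sig Q q0 tau phi Q' q0' tau' phi' Psi \<longleftrightarrow>
     Psi ` Q = Q' \<and> Psi q0 = q0' \<and> (\<forall>q\<in>Q. phi q = phi' (Psi q)) \<and>
     (\<forall>q\<in>Q. \<forall>\<sigma>\<in>Sig. \<forall>q'\<in>tau q \<sigma>. Psi q' \<in> tau' (Psi q) \<sigma>)"

end

theory Submission
  imports Defs
begin

text \<open>Every state of a finite automaton reaches some closed class. So if the recurrent states
  form a single closed class, every state of \<open>A\<close> reaches every recurrent state \<open>c\<close>. Since the
  merge maps paths of \<open>A\<close> to paths of \<open>\<tilde>A\<close> and is onto, every state of \<open>\<tilde>A\<close> then reaches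
  \<open>\<Psi> c\<close>; hence the states reachable from \<open>\<Psi> c\<close> all communicate with it and form a closed
  class of \<open>\<tilde>A\<close>.\<close>

lemma tau_str_append:
  "tau_str tau q (x @ y) = (\<Union>q'\<in>tau_str tau q x. tau_str tau q' y)"
proof (induction y rule: rev_induct)
  case Nil
  then show ?case by (simp add: tau_str_Nil)
next
  case (snoc \<sigma> y)
  then show ?case
    using tau_str_snoc[of tau q "x @ y" \<sigma>] by (auto simp: tau_str_snoc)
qed

lemma tau_star_UN: "tau_star Sig tau S = (\<Union>q\<in>S. tau_star Sig tau {q})"
  by (auto simp: tau_star_def)

lemma tau_star_refl: "q \<in> tau_star Sig tau {q}"
proof -
  have "q \<in> tau_str tau q []" by (simp add: tau_str_Nil)
  then show ?thesis unfolding tau_star_def by blast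
qed

lemma tau_star_trans:
  assumes "a \<in> tau_star Sig tau {q}" and "b \<in> tau_star Sig tau {a}"
  shows "b \<in> tau_star Sig tau {q}"
proof -
  obtain x where x: "x \<in> lists Sig" "a \<in> tau_str tau q x"
    using assms(1) by (auto simp: tau_star_def)
  obtain y where y: "y \<in> lists Sig" "b \<in> tau_str tau a y"
    using assms(2) by (auto simp: tau_star_def)
  have "b \<in> tau_str tau q (x @ y)" and "x @ y \<in> lists Sig"
    using x y by (auto simp: tau_str_append)
  then show ?thesis unfolding tau_star_def by blast
qed

lemma tau_star_mono:
  assumes "a \<in> tau_star Sig tau {q}"
  shows "tau_star Sig tau {a} \<subseteq> tau_star Sig tau {q}"
  using assms tau_star_trans by fast

lemma tau_str_subset:
  assumes "nfa Sig Q q0 tau phi" and "q \<in> Q" and "x \<in> lists Sig"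
  shows "tau_str tau q x \<subseteq> Q"
  using assms(3)
proof (induction x rule: rev_induct)
  case Nil
  then show ?case using assms(2) by (simp add: tau_str_Nil)
next
  case (snoc \<sigma> x)
  have "\<forall>q\<in>Q. \<forall>\<sigma>\<in>Sig. tau q \<sigma> \<subseteq> Q"
    using assms(1) by (simp add: nfa_def)
  then show ?case
    using snoc unfolding tau_str_snoc by auto
qed

lemma tau_star_subset:
  assumes "nfa Sig Q q0 tau phi" and "q \<in> Q"
  shows "tau_star Sig tau {q} \<subseteq> Q"
  using tau_str_subset[OF assms] by (auto simp: tau_star_def)

lemma merge_op_tau_str:
  assumes "nfa Sig Q q0 tau phi" and "merge_op Sig Q q0 tau phi Qt q0t taut phit Psi"
    and "q \<in> Q" and "x \<in> lists Sig" and "q' \<in> tau_str tau q x"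
  shows "Psi q' \<in> tau_str taut (Psi q) x"
  using assms(4,5)
proof (induction x arbitrary: q' rule: rev_induct)
  case Nil
  then show ?case by (simp add: tau_str_Nil)
next
  case (snoc \<sigma> x)
  then obtain q'' where q'': "q'' \<in> tau_str tau q x" "q' \<in> tau q'' \<sigma>"
    by (auto simp: tau_str_snoc)
  have "q'' \<in> Q"
    using tau_str_subset[OF assms(1,3)] snoc.prems q''(1) by auto
  then have "Psi q' \<in> taut (Psi q'') \<sigma>"
    using assms(2) q''(2) snoc.prems unfolding merge_op_def by auto
  moreover have "Psi q'' \<in> tau_str taut (Psi q) x"
    using snoc q'' by auto
  ultimately show ?case by (auto simp: tau_str_snoc)
qed

lemma merge_op_tau_star:
  assumes "nfa Sig Q q0 tau phi" and "merge_op Sig Q q0 tau phi Qt q0t taut phit Psi"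
    and "q \<in> Q" and "q' \<in> tau_star Sig tau {q}"
  shows "Psi q' \<in> tau_star Sig taut {Psi q}"
  using merge_op_tau_str[OF assms(1-3)] assms(4) by (auto simp: tau_star_def)

lemma comm_classes_reach:
  assumes "C \<in> comm_classes Sig Q tau" and "a \<in> C" and "b \<in> C"
  shows "b \<in> tau_star Sig tau {a}"
proof -
  obtain q where "C = {x \<in> Q. communicate Sig tau q x}"
    using assms(1) by (auto simp: comm_classes_def)
  then have "q \<in> tau_star Sig tau {a}" and "b \<in> tau_star Sig tau {q}"
    using assms(2,3) by (auto simp: communicate_def)
  then show ?thesis by (rule tau_star_trans)
qed

lemma tau_star_tau_star: "tau_star Sig tau (tau_star Sig tau {q}) = tau_star Sig tau {q}"
proof
  show "tau_star Sig tau (tau_star Sig tau {q}) \<subseteq> tau_star Sig tau {q}"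
    unfolding tau_star_UN[of Sig tau "tau_star Sig tau {q}"]
    using tau_star_mono by (rule UN_least)
  show "tau_star Sig tau {q} \<subseteq> tau_star Sig tau (tau_star Sig tau {q})"
    unfolding tau_star_UN[of Sig tau "tau_star Sig tau {q}"]
    using tau_star_refl by fast
qed

lemma tau_star_in_closed_classes:
  assumes "nfa Sig Q q0 tau phi" and "q \<in> Q"
    and returns: "\<And>r. r \<in> tau_star Sig tau {q} \<Longrightarrow> q \<in> tau_star Sig tau {r}"
  shows "tau_star Sig tau {q} \<in> closed_classes Sig Q tau"
proof -
  have "tau_star Sig tau {q} = {x \<in> Q. communicate Sig tau q x}"
    using returns tau_star_subset[OF assms(1,2)] unfolding communicate_def by blast
  then have "tau_star Sig tau {q} \<in> comm_classes Sig Q tau"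
    using assms(2) unfolding comm_classes_def by blast
  then show ?thesis
    by (simp add: closed_classes_def tau_star_tau_star)
qed

lemma reaches_closed_class:
  assumes "nfa Sig Q q0 tau phi" and "q \<in> Q"
  obtains C c where "C \<in> closed_classes Sig Q tau" and "c \<in> C" and "c \<in> tau_star Sig tau {q}"
proof -
  \<comment> \<open>A reachable state whose reachable set is smallest returns from everywhere it reaches.\<close>
  obtain q' where q': "q' \<in> tau_star Sig tau {q}"
    and least: "\<And>x. x \<in> tau_star Sig tau {q} \<Longrightarrow>
                  card (tau_star Sig tau {q'}) \<le> card (tau_star Sig tau {x})"
    using ex_has_least_nat[where P = "\<lambda>x. x \<in> tau_star Sig tau {q}"
        and m = "\<lambda>x. card (tau_star Sig tau {x})", OF tau_star_refl] by blast
  have q'Q: "q' \<in> Q" using q' tau_star_subset[OF assms] by auto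
  have "finite Q" using assms(1) by (simp add: nfa_def)
  then have fin: "finite (tau_star Sig tau {q'})"
    by (rule finite_subset[OF tau_star_subset[OF assms(1) q'Q]])
  have "q' \<in> tau_star Sig tau {x}" if x: "x \<in> tau_star Sig tau {q'}" for x
  proof -
    have "tau_star Sig tau {x} \<subseteq> tau_star Sig tau {q'}"
      using x by (rule tau_star_mono)
    moreover have "card (tau_star Sig tau {q'}) \<le> card (tau_star Sig tau {x})"
      using least tau_star_trans[OF q' x] by blast
    ultimately have "tau_star Sig tau {x} = tau_star Sig tau {q'}"
      using card_seteq[OF fin] by blast
    then show ?thesis using tau_star_refl[of q' Sig tau] by simp
  qed
  then have "tau_star Sig tau {q'} \<in> closed_classes Sig Q tau"
    by (rule tau_star_in_closed_classes[OF assms(1) q'Q])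
  then show ?thesis by (rule that[OF _ tau_star_refl q'])
qed

lemma reaches_recurrent_states_if_single_class:
  assumes "nfa Sig Q q0 tau phi" and "recurrent_states Sig Q tau \<in> closed_classes Sig Q tau"
    and "q \<in> Q" and "c \<in> recurrent_states Sig Q tau"
  shows "c \<in> tau_star Sig tau {q}"
proof -
  obtain D d where D: "D \<in> closed_classes Sig Q tau" "d \<in> D" "d \<in> tau_star Sig tau {q}"
    using reaches_closed_class[OF assms(1,3)] .
  have "d \<in> recurrent_states Sig Q tau"
    using D(1,2) by (auto simp: recurrent_states_def)
  moreover have "recurrent_states Sig Q tau \<in> comm_classes Sig Q tau"
    using assms(2) by (simp add: closed_classes_def)
  ultimately have "c \<in> tau_star Sig tau {d}"
    using assms(4) comm_classes_reach by fast
  then show ?thesis using D(3) tau_star_trans by fast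
qed

lemma recurrent_if_reached_from_all:
  assumes "nfa Sig Q q0 tau phi" and "p \<in> Q"
    and "\<And>r. r \<in> Q \<Longrightarrow> p \<in> tau_star Sig tau {r}"
  shows "p \<in> recurrent_states Sig Q tau"
proof -
  have "tau_star Sig tau {p} \<in> closed_classes Sig Q tau"
    using tau_star_in_closed_classes[OF assms(1,2)] assms(3) tau_star_subset[OF assms(1,2)]
    by blast
  then show ?thesis
    using tau_star_refl[of p Sig tau] unfolding recurrent_states_def by blast
qed

theorem lemma4:
  fixes Sig :: "'s set" and Q :: "'q set" and Qt :: "'p set"
  assumes "nfa Sig Q q0 tau phi"
    and "nfa Sig Qt q0t taut phit"
    and "merge_op Sig Q q0 tau phi Qt q0t taut phit Psi"
    and "\<exists>C \<in> closed_classes Sig Q tau. recurrent_states Sig Q tau = C"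
  shows "Psi ` recurrent_states Sig Q tau \<subseteq> recurrent_states Sig Qt taut"
proof
  fix p assume "p \<in> Psi ` recurrent_states Sig Q tau"
  then obtain c where c: "c \<in> recurrent_states Sig Q tau" and p: "p = Psi c" by blast
  have single: "recurrent_states Sig Q tau \<in> closed_classes Sig Q tau"
    using assms(4) by blast
  have Qt: "Qt = Psi ` Q" using assms(3) by (simp add: merge_op_def)
  have "c \<in> Q"
    using c by (auto simp: recurrent_states_def closed_classes_def comm_classes_def)
  then have "p \<in> Qt" using Qt p by blast
  moreover have "p \<in> tau_star Sig taut {r}" if "r \<in> Qt" for r
  proof -
    obtain q where q: "q \<in> Q" "r = Psi q" using \<open>r \<in> Qt\<close> Qt by blast
    show ?thesis
      using merge_op_tau_star[OF assms(1,3) q(1)]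
        reaches_recurrent_states_if_single_class[OF assms(1) single q(1) c] q(2) p by blast
  qed
  ultimately show "p \<in> recurrent_states Sig Qt taut"
    by (rule recurrent_if_reached_from_all[OF assms(2)])
qed

end
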